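(* Let $L$ be a frame. The map $\nu(F)=\bigcap_{a\in F}\mathfrak o(a)$ restricts to an order isomorphism from $(\mathrm{Int}(\mathsf{SO}(L)),\sqsubseteq)$ onto $(\{\mathrm{fit}(S)\mid S\in\mathcal S_k(L)\},\subseteq)$, with inverse $S\mapsto\{a\in L\mid S\subseteq\mathfrak o(a)\}$.
   Context: A frame is a complete lattice $L$ with $(\bigvee A)\wedge b=\bigvee_{a\in A}(a\wedge b)$, Heyting implication $\to$. A sublocale is a subset $S\subseteq L$ closed under all meets with $a\to s\in S$ for $a\in L,s\in S$; sublocales form a coframe $\mathsf{Sl}(L)$ under inclusion with joins $\bigvee_i S_i=\{\bigwedge A\mid A\subseteq\bigcup_i S_i\}$. $\mathfrak o(a)=\{a\to b\mid b\in L\}$. $\mathrm{fit}(S)=\bigcap\{\mathfrak o(a)\mid S\subseteq\mathfrak o(a)\}$. A sublocale $S$ is compact if $S\subseteq\bigvee_{a\in A}\mathfrak o(a)$ implies $S\subseteq\mathfrak o(a_1)\vee\dots\vee\mathfrak o(a_n)$ for some $a_1,\dots,a_n\in A$; $\mathcal S_k(L)$ is the set of joins in $\mathsf{Sl}(L)$ of compact sublocales. Filters are nonempty up-closed subsets closed under finite meets, ordered by reverse inclusion $\sqsubseteq$; a filter $F$ is Scott-open if every directed $D$ with $\bigvee D\in F$ meets $F$; $\mathsf{SO}(L)$ is the set of Scott-open filters, and $\mathrm{Int}(\mathsf{SO}(L))$ the set of intersections of subfamilies of it (empty intersection $=L$). *)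

theory Defs
  imports Main
begin

definition is_frame :: "'a::complete_lattice itself \<Rightarrow> bool" where
  "is_frame _ \<longleftrightarrow> (\<forall>(A::'a set) b. inf (Sup A) b = (SUP a\<in>A. inf a b))"

definition himp :: "'a::complete_lattice \<Rightarrow> 'a \<Rightarrow> 'a" where
  "himp a b = Sup {c. inf c a \<le> b}"

definition sublocale_of :: "'a::complete_lattice set \<Rightarrow> bool" where
  "sublocale_of S \<longleftrightarrow> (\<forall>A. A \<subseteq> S \<longrightarrow> Inf A \<in> S) \<and> (\<forall>a s. s \<in> S \<longrightarrow> himp a s \<in> S)"

definition sl_join :: "'a::complete_lattice set set \<Rightarrow> 'a set" where
  "sl_join \<S> = {Inf A | A. A \<subseteq> \<Union>\<S>}"

definition open_sl :: "'a::complete_lattice \<Rightarrow> 'a set" where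
  "open_sl a = {himp a b | b. True}"

definition fit :: "'a::complete_lattice set \<Rightarrow> 'a set" where
  "fit S = \<Inter>{open_sl a | a. S \<subseteq> open_sl a}"

definition compact_sl :: "'a::complete_lattice set \<Rightarrow> bool" where
  "compact_sl S \<longleftrightarrow> sublocale_of S \<and>
     (\<forall>A. S \<subseteq> sl_join (open_sl ` A) \<longrightarrow>
        (\<exists>B. finite B \<and> B \<subseteq> A \<and> S \<subseteq> sl_join (open_sl ` B)))"

definition Sk :: "'a::complete_lattice set set" where
  "Sk = {sl_join \<C> | \<C>. \<C> \<subseteq> {S. compact_sl S}}"

definition is_filter :: "'a::complete_lattice set \<Rightarrow> bool" where
  "is_filter F \<longleftrightarrow> F \<noteq> {} \<and> (\<forall>a b. a \<in> F \<and> a \<le> b \<longrightarrow> b \<in> F) \<and>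
     (\<forall>a b. a \<in> F \<and> b \<in> F \<longrightarrow> inf a b \<in> F)"

definition directed_set :: "'a::complete_lattice set \<Rightarrow> bool" where
  "directed_set D \<longleftrightarrow> D \<noteq> {} \<and> (\<forall>x\<in>D. \<forall>y\<in>D. \<exists>z\<in>D. x \<le> z \<and> y \<le> z)"

definition scott_open_filter :: "'a::complete_lattice set \<Rightarrow> bool" where
  "scott_open_filter F \<longleftrightarrow> is_filter F \<and>
     (\<forall>D. directed_set D \<and> Sup D \<in> F \<longrightarrow> D \<inter> F \<noteq> {})"

text \<open>Intersections of families of Scott-open filters (empty intersection = L).\<close>
definition IntSO :: "'a::complete_lattice set set" where
  "IntSO = {\<Inter>\<F> | \<F>. \<F> \<subseteq> {F. scott_open_filter F}}"

definition nu :: "'a::complete_lattice set \<Rightarrow> 'a set" where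
  "nu F = (\<Inter>a\<in>F. open_sl a)"

end

theory Submission
  imports Defs
begin

text \<open>
  A Scott-open filter \<open>F\<close> is recovered from \<open>nu F\<close>. If \<open>b \<notin> F\<close>, Zorn's lemma (the complement
  of \<open>F\<close> is closed under directed joins) gives some \<open>m \<ge> b\<close> maximal outside \<open>F\<close>; maximality
  forces \<open>a \<rightarrow> m = m\<close> for every \<open>a \<in> F\<close>, i.e. \<open>m \<in> nu F\<close>, whereas \<open>m \<in> open_sl b\<close> would give
  \<open>m = b \<rightarrow> m = \<top> \<in> F\<close>. Hence \<open>F = {a. nu F \<subseteq> open_sl a}\<close>, also for intersections of Scott-open
  filters. Since \<open>open_sl (\<Squnion>A)\<close> equals the sublocale join of the \<open>open_sl a\<close>, \<open>a \<in> A\<close>, compactness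
  of \<open>K\<close> makes \<open>{a. K \<subseteq> open_sl a}\<close> Scott-open, and Scott-openness of \<open>F\<close> makes \<open>nu F\<close> compact.
  Finally \<open>fit S = nu {a. S \<subseteq> open_sl a}\<close> links the two sides.
\<close>

lemma order_eqI_lower_bounds: "(\<And>c. c \<le> x \<longleftrightarrow> c \<le> y) \<Longrightarrow> x = (y::'a::order)"
  by (metis order.antisym order.refl)

lemma himp_top: "himp top b = b"
  by (simp add: himp_def atMost_def[symmetric])

lemma himp_eq_top: "a \<le> b \<Longrightarrow> himp a b = top"
  unfolding himp_def by (rule top_le, rule Sup_upper) (simp add: le_infI2)

lemma open_sl_top: "open_sl top = UNIV"
  unfolding open_sl_def by (metis (mono_tags, lifting) UNIV_eq_I himp_top mem_Collect_eq)

lemma sublocale_of_Inter: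
  assumes "\<And>S. S \<in> \<S> \<Longrightarrow> sublocale_of S"
  shows "sublocale_of (\<Inter>\<S>)"
  unfolding sublocale_of_def
proof (intro conjI allI impI)
  fix A assume A: "A \<subseteq> \<Inter>\<S>"
  show "Inf A \<in> \<Inter>\<S>"
  proof
    fix S assume "S \<in> \<S>"
    with A have "A \<subseteq> S" by blast
    with assms[OF \<open>S \<in> \<S>\<close>] show "Inf A \<in> S" unfolding sublocale_of_def by blast
  qed
next
  fix a s assume "s \<in> \<Inter>\<S>"
  then show "himp a s \<in> \<Inter>\<S>" using assms unfolding sublocale_of_def by blast
qed

lemma fit_subset_open_sl_iff: "fit S \<subseteq> open_sl a \<longleftrightarrow> S \<subseteq> open_sl a"
  unfolding fit_def by blast

lemma fit_fit: "fit (fit S) = fit S"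
  unfolding fit_def[of "fit S"] fit_subset_open_sl_iff unfolding fit_def ..

lemma fit_eq_nu: "fit S = nu {a. S \<subseteq> open_sl a}"
  unfolding fit_def nu_def by blast

lemma nu_antimono: "G \<subseteq> F \<Longrightarrow> nu F \<subseteq> nu G"
  unfolding nu_def by blast

lemma nu_subset_open_sl: "a \<in> F \<Longrightarrow> nu F \<subseteq> open_sl a"
  unfolding nu_def by blast

lemma directed_set_finite_upper_bound:
  assumes D: "directed_set D" and "finite B" "B \<subseteq> D"
  shows "\<exists>d\<in>D. \<forall>x\<in>B. x \<le> d"
  using \<open>finite B\<close> \<open>B \<subseteq> D\<close>
proof (induction B rule: finite_induct)
  case empty
  then show ?case using D by (auto simp: directed_set_def)
next
  case (insert x B)
  then obtain d where "d \<in> D" "\<forall>y\<in>B. y \<le> d" by auto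
  moreover obtain z where "z \<in> D" "x \<le> z" "d \<le> z"
    using D insert.prems \<open>d \<in> D\<close> unfolding directed_set_def by blast
  ultimately show ?case by (auto intro: order_trans)
qed

lemma directed_set_finite_Sups: "directed_set {Sup B | B. finite B \<and> B \<subseteq> A}"
  unfolding directed_set_def
proof (intro conjI ballI)
  show "{Sup B | B. finite B \<and> B \<subseteq> A} \<noteq> {}" by blast
next
  fix x y assume "x \<in> {Sup B | B. finite B \<and> B \<subseteq> A}" "y \<in> {Sup B | B. finite B \<and> B \<subseteq> A}"
  then obtain B1 B2 where "x = Sup B1" "y = Sup B2" "finite B1" "finite B2" "B1 \<subseteq> A" "B2 \<subseteq> A"
    by blast
  then show "\<exists>z\<in>{Sup B | B. finite B \<and> B \<subseteq> A}. x \<le> z \<and> y \<le> z"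
    by (intro bexI[of _ "Sup (B1 \<union> B2)"]) (auto intro: Sup_subset_mono)
qed

lemma Sup_finite_Sups: "Sup {Sup B | B. finite B \<and> B \<subseteq> A} = Sup (A::'a::complete_lattice set)"
proof (rule order.antisym)
  show "Sup {Sup B | B. finite B \<and> B \<subseteq> A} \<le> Sup A"
    by (rule Sup_least) (auto intro: Sup_subset_mono)
  have "x \<le> Sup {Sup B | B. finite B \<and> B \<subseteq> A}" if "x \<in> A" for x
  proof (rule Sup_upper2)
    show "Sup {x} \<in> {Sup B | B. finite B \<and> B \<subseteq> A}"
      using that by (intro CollectI exI[of _ "{x}"]) simp
  qed simp
  then show "Sup A \<le> Sup {Sup B | B. finite B \<and> B \<subseteq> A}"
    by (rule Sup_least)
qed

lemma scott_open_filter_top: "scott_open_filter F \<Longrightarrow> top \<in> F"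
  unfolding scott_open_filter_def is_filter_def by (metis ex_in_conv top_greatest)

lemma scott_open_filter_maximal_outside:
  assumes F: "scott_open_filter F" and "b \<notin> F"
  obtains m where "b \<le> m" "m \<notin> F" "\<And>c. m \<le> c \<Longrightarrow> c \<notin> F \<Longrightarrow> c = m"
proof -
  let ?U = "{m. b \<le> m \<and> m \<notin> F}"
  have "partial_order_on ?U (relation_of (\<le>) ?U)"
    by (rule partial_order_on_relation_ofI) auto
  then have "\<exists>m\<in>?U. \<forall>c\<in>?U. m \<le> c \<longrightarrow> c = m"
  proof (rule predicate_Zorn)
    fix C assume "C \<in> Chains (relation_of (\<le>) ?U)"
    then have CU: "C \<subseteq> ?U" and chain: "\<forall>x\<in>C. \<forall>y\<in>C. x \<le> y \<or> y \<le> x"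
      unfolding Chains_def relation_of_def by auto
    show "\<exists>u\<in>?U. \<forall>c\<in>C. c \<le> u"
    proof (cases "C = {}")
      case True
      then show ?thesis using \<open>b \<notin> F\<close> by auto
    next
      case False
      then have "directed_set C" unfolding directed_set_def using chain by blast
      with CU F have "Sup C \<notin> F" unfolding scott_open_filter_def by blast
      moreover from False CU have "b \<le> Sup C" by (auto intro: Sup_upper2)
      ultimately show ?thesis by (auto intro: Sup_upper)
    qed
  qed
  then obtain m where "b \<le> m" "m \<notin> F" and max: "\<forall>c\<in>?U. m \<le> c \<longrightarrow> c = m"
    by blast
  have maximal: "c = m" if "m \<le> c" "c \<notin> F" for c
  proof -
    from \<open>b \<le> m\<close> \<open>m \<le> c\<close> have "b \<le> c" by (rule order_trans)
    with max that show "c = m" by blast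
  qed
  from \<open>b \<le> m\<close> \<open>m \<notin> F\<close> maximal show ?thesis by (rule that)
qed

context
  assumes frame: "is_frame TYPE('a::complete_lattice)"
begin

lemma frame_inf_Sup: "inf c (Sup D) = (SUP d\<in>D. inf c (d::'a))"
  using frame by (simp add: is_frame_def inf_commute)

lemma le_himp_iff: "c \<le> himp a b \<longleftrightarrow> inf c a \<le> (b::'a)"
proof
  assume "inf c a \<le> b"
  then show "c \<le> himp a b" unfolding himp_def by (simp add: Sup_upper)
next
  assume "c \<le> himp a b"
  then have "inf c a \<le> inf a (Sup {c. inf c a \<le> b})"
    by (simp add: himp_def inf_commute le_infI2)
  also have "\<dots> = (SUP d\<in>{c. inf c a \<le> b}. inf a d)" by (rule frame_inf_Sup)
  also have "\<dots> \<le> b" by (auto intro!: SUP_least simp: inf_commute)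
  finally show "inf c a \<le> b" .
qed

lemma himp_Inf: "himp a (Inf X) = (INF x\<in>X. himp a (x::'a))"
  by (rule order_eqI_lower_bounds) (auto simp: le_himp_iff le_Inf_iff)

lemma himp_Sup: "himp (Sup D) x = (INF d\<in>D. himp d (x::'a))"
  by (rule order_eqI_lower_bounds) (auto simp: le_himp_iff le_Inf_iff frame_inf_Sup SUP_le_iff)

lemma himp_himp: "himp b (himp a x) = himp (inf b a) (x::'a)"
  by (rule order_eqI_lower_bounds) (simp add: le_himp_iff inf_assoc)

lemma mem_open_sl_iff: "x \<in> open_sl a \<longleftrightarrow> himp a x = (x::'a)"
  unfolding open_sl_def by (auto simp: himp_himp) (metis)

lemma open_sl_mono: "a \<le> b \<Longrightarrow> open_sl a \<subseteq> open_sl (b::'a)"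
  by (auto simp: mem_open_sl_iff) (metis himp_himp inf.absorb2)

lemma open_sl_Int_subset: "open_sl a \<inter> open_sl b \<subseteq> open_sl (inf a (b::'a))"
  by (auto simp: mem_open_sl_iff) (metis himp_himp)

lemma Inf_mem_open_sl: "X \<subseteq> open_sl a \<Longrightarrow> Inf X \<in> open_sl (a::'a)"
  by (simp add: mem_open_sl_iff himp_Inf subset_iff)

lemma sublocale_of_open_sl: "sublocale_of (open_sl (a::'a))"
  unfolding sublocale_of_def
proof (intro conjI allI impI Inf_mem_open_sl)
  fix b s assume "s \<in> open_sl a"
  have "himp a (himp b s) = himp b (himp a s)" by (simp add: himp_himp inf_commute)
  also have "\<dots> = himp b s" using \<open>s \<in> open_sl a\<close> by (simp add: mem_open_sl_iff)
  finally show "himp b s \<in> open_sl a" by (simp add: mem_open_sl_iff)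
qed

lemma sublocale_of_nu: "sublocale_of (nu (F::'a set))"
  unfolding nu_def by (auto intro: sublocale_of_Inter sublocale_of_open_sl)

text \<open>Each \<open>x \<in> open_sl (\<Squnion>D)\<close> is the meet of the elements \<open>d \<rightarrow> x \<in> open_sl d\<close>, \<open>d \<in> D\<close>.\<close>
lemma open_sl_Sup_subset_sl_join: "open_sl (Sup D) \<subseteq> sl_join (open_sl ` (D::'a set))"
proof
  fix x assume "x \<in> open_sl (Sup D)"
  then have "x = Inf ((\<lambda>d. himp d x) ` D)" by (simp add: mem_open_sl_iff himp_Sup)
  moreover have "(\<lambda>d. himp d x) ` D \<subseteq> \<Union>(open_sl ` D)" unfolding open_sl_def by blast
  ultimately show "x \<in> sl_join (open_sl ` D)" unfolding sl_join_def by blast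
qed

lemma sl_join_subset_open_sl_iff: "sl_join \<C> \<subseteq> open_sl a \<longleftrightarrow> (\<forall>S\<in>\<C>. S \<subseteq> open_sl (a::'a))"
proof
  assume h: "sl_join \<C> \<subseteq> open_sl a"
  have "x \<in> sl_join \<C>" if "S \<in> \<C>" "x \<in> S" for S x
    using that unfolding sl_join_def by (intro CollectI exI[of _ "{x}"]) auto
  with h show "\<forall>S\<in>\<C>. S \<subseteq> open_sl a" by blast
next
  assume "\<forall>S\<in>\<C>. S \<subseteq> open_sl a"
  then show "sl_join \<C> \<subseteq> open_sl a" unfolding sl_join_def by (auto intro!: Inf_mem_open_sl)
qed

lemma sl_join_open_sl_subset: "sl_join (open_sl ` A) \<subseteq> open_sl (Sup (A::'a set))"
  unfolding sl_join_subset_open_sl_iff by (auto intro: open_sl_mono[THEN subsetD] Sup_upper)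

lemma maximal_outside_filter_mem_nu:
  assumes F: "is_filter (F::'a set)" and "m \<notin> F" and max: "\<And>c. m \<le> c \<Longrightarrow> c \<notin> F \<Longrightarrow> c = m"
  shows "m \<in> nu F"
proof -
  have "himp a m = m" if "a \<in> F" for a
  proof (rule ccontr)
    assume "himp a m \<noteq> m"
    moreover have "m \<le> himp a m" by (simp add: le_himp_iff)
    ultimately have "himp a m \<in> F" using max by blast
    with \<open>a \<in> F\<close> F have "inf (himp a m) a \<in> F" unfolding is_filter_def by blast
    moreover have "inf (himp a m) a \<le> m" by (simp add: le_himp_iff[symmetric])
    ultimately show False using F \<open>m \<notin> F\<close> unfolding is_filter_def by blast
  qed
  then show ?thesis unfolding nu_def by (simp add: mem_open_sl_iff)
qed

lemma nu_subset_open_sl_iff: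
  assumes F: "scott_open_filter (F::'a set)"
  shows "nu F \<subseteq> open_sl b \<longleftrightarrow> b \<in> F"
proof
  assume sub: "nu F \<subseteq> open_sl b"
  show "b \<in> F"
  proof (rule ccontr)
    assume "b \<notin> F"
    then obtain m where m: "b \<le> m" "m \<notin> F" "\<And>c. m \<le> c \<Longrightarrow> c \<notin> F \<Longrightarrow> c = m"
      using F scott_open_filter_maximal_outside by blast
    with F have "m \<in> nu F"
      unfolding scott_open_filter_def by (blast intro: maximal_outside_filter_mem_nu)
    with sub have "m = himp b m" by (simp add: subset_iff mem_open_sl_iff)
    also have "\<dots> = top" using \<open>b \<le> m\<close> by (rule himp_eq_top)
    finally show False using m(2) scott_open_filter_top[OF F] by simp
  qed
qed (rule nu_subset_open_sl)

lemma nu_subset_open_sl_iff_IntSO: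
  assumes "F \<in> (IntSO::'a set set)"
  shows "nu F \<subseteq> open_sl b \<longleftrightarrow> b \<in> F"
proof
  obtain \<F> where F: "F = \<Inter>\<F>" "\<F> \<subseteq> {F. scott_open_filter F}"
    using assms unfolding IntSO_def by blast
  assume "nu F \<subseteq> open_sl b"
  moreover have "nu G \<subseteq> nu F" if "G \<in> \<F>" for G
    using that F(1) by (intro nu_antimono) blast
  ultimately show "b \<in> F"
    using F nu_subset_open_sl_iff by blast
qed (rule nu_subset_open_sl)

lemma nu_subset_nu_iff:
  assumes "F \<in> (IntSO::'a set set)" "G \<in> IntSO"
  shows "nu F \<subseteq> nu G \<longleftrightarrow> G \<subseteq> F"
  using nu_subset_open_sl_iff_IntSO[OF assms(1)] nu_subset_open_sl_iff_IntSO[OF assms(2)]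
  by (meson nu_antimono order_trans subsetI)

lemma compact_sl_nu:
  assumes F: "scott_open_filter (F::'a set)"
  shows "compact_sl (nu F)"
  unfolding compact_sl_def
proof (intro conjI allI impI sublocale_of_nu)
  fix A assume "nu F \<subseteq> sl_join (open_sl ` A)"
  then have "nu F \<subseteq> open_sl (Sup A)" using sl_join_open_sl_subset by blast
  then have "Sup {Sup B | B. finite B \<and> B \<subseteq> A} \<in> F"
    by (simp add: Sup_finite_Sups nu_subset_open_sl_iff[OF F])
  then obtain B where "finite B" "B \<subseteq> A" "Sup B \<in> F"
    using F directed_set_finite_Sups unfolding scott_open_filter_def by blast
  moreover from \<open>Sup B \<in> F\<close> have "nu F \<subseteq> sl_join (open_sl ` B)"
    using nu_subset_open_sl open_sl_Sup_subset_sl_join by blast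
  ultimately show "\<exists>B. finite B \<and> B \<subseteq> A \<and> nu F \<subseteq> sl_join (open_sl ` B)" by blast
qed

lemma scott_open_filter_open_covers:
  assumes K: "compact_sl (K::'a set)"
  shows "scott_open_filter {a. K \<subseteq> open_sl a}"
  unfolding scott_open_filter_def is_filter_def
proof (intro conjI allI impI)
  show "{a. K \<subseteq> open_sl a} \<noteq> {}" using open_sl_top by auto
  show "b \<in> {a. K \<subseteq> open_sl a}" if "a \<in> {a. K \<subseteq> open_sl a} \<and> a \<le> b" for a b
    using that open_sl_mono by blast
  show "inf a b \<in> {a. K \<subseteq> open_sl a}"
    if "a \<in> {a. K \<subseteq> open_sl a} \<and> b \<in> {a. K \<subseteq> open_sl a}" for a b
    using that open_sl_Int_subset by blast
next
  fix D assume D: "directed_set D \<and> Sup D \<in> {a. K \<subseteq> open_sl a}"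
  then have "K \<subseteq> sl_join (open_sl ` D)" using open_sl_Sup_subset_sl_join by blast
  then obtain B where "finite B" "B \<subseteq> D" "K \<subseteq> sl_join (open_sl ` B)"
    using K unfolding compact_sl_def by blast
  moreover obtain d where "d \<in> D" "\<forall>x\<in>B. x \<le> d"
    using D directed_set_finite_upper_bound \<open>finite B\<close> \<open>B \<subseteq> D\<close> by blast
  moreover from \<open>\<forall>x\<in>B. x \<le> d\<close> have "sl_join (open_sl ` B) \<subseteq> open_sl d"
    unfolding sl_join_subset_open_sl_iff using open_sl_mono by blast
  ultimately have "d \<in> D \<inter> {a. K \<subseteq> open_sl a}" by blast
  then show "D \<inter> {a. K \<subseteq> open_sl a} \<noteq> {}" by blast
qed

lemma nu_IntSO_mem_fit_Sk:
  assumes "F \<in> (IntSO::'a set set)"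
  shows "nu F \<in> fit ` Sk"
proof -
  obtain \<F> where F: "F = \<Inter>\<F>" "\<F> \<subseteq> {F. scott_open_filter F}"
    using assms unfolding IntSO_def by blast
  have "sl_join (nu ` \<F>) \<in> Sk"
    using F(2) compact_sl_nu unfolding Sk_def by blast
  moreover have "{a. sl_join (nu ` \<F>) \<subseteq> open_sl a} = F"
    unfolding sl_join_subset_open_sl_iff using F nu_subset_open_sl_iff by blast
  then have "fit (sl_join (nu ` \<F>)) = nu F" by (simp add: fit_eq_nu)
  ultimately show ?thesis by (metis image_eqI)
qed

lemma open_covers_fit_Sk_mem_IntSO:
  assumes "S \<in> fit ` (Sk::'a set set)"
  shows "{a. S \<subseteq> open_sl a} \<in> IntSO"
proof -
  obtain \<C> where "S = fit (sl_join \<C>)" "\<C> \<subseteq> {K. compact_sl K}"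
    using assms unfolding Sk_def by blast
  then have "{a. S \<subseteq> open_sl a} = \<Inter>((\<lambda>K. {a. K \<subseteq> open_sl a}) ` \<C>)"
    and "(\<lambda>K. {a. K \<subseteq> open_sl a}) ` \<C> \<subseteq> {F. scott_open_filter F}"
    by (auto simp: fit_subset_open_sl_iff sl_join_subset_open_sl_iff scott_open_filter_open_covers)
  then show ?thesis unfolding IntSO_def by blast
qed

end

theorem mainTheorem14:
  assumes "is_frame TYPE('a::complete_lattice)"
  shows "bij_betw (nu :: 'a set \<Rightarrow> 'a set) IntSO (fit ` Sk)
     \<and> (\<forall>F\<in>(IntSO :: 'a set set). \<forall>G\<in>IntSO. G \<subseteq> F \<longleftrightarrow> nu F \<subseteq> nu G)
     \<and> (\<forall>S\<in>fit ` (Sk :: 'a set set). {a. S \<subseteq> open_sl a} \<in> IntSO \<and> nu {a. S \<subseteq> open_sl a} = S)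
     \<and> (\<forall>F\<in>(IntSO :: 'a set set). {a. nu F \<subseteq> open_sl a} = F)"
proof (intro conjI ballI)
  have recover: "{a. nu F \<subseteq> open_sl a} = F" if "F \<in> (IntSO :: 'a set set)" for F
    using nu_subset_open_sl_iff_IntSO[OF assms that] by blast
  have fitted: "nu {a. S \<subseteq> open_sl a} = S" if "S \<in> fit ` (Sk :: 'a set set)" for S
    using that by (auto simp flip: fit_eq_nu simp: fit_fit)
  show "bij_betw (nu :: 'a set \<Rightarrow> 'a set) IntSO (fit ` Sk)"
    by (rule bij_betw_byWitness[where f' = "\<lambda>S. {a. S \<subseteq> open_sl a}"])
      (use recover fitted nu_IntSO_mem_fit_Sk[OF assms] open_covers_fit_Sk_mem_IntSO[OF assms] in auto)
  show "G \<subseteq> F \<longleftrightarrow> nu F \<subseteq> nu G" if "F \<in> IntSO" "G \<in> IntSO" for F G :: "'a set"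
    using nu_subset_nu_iff[OF assms that] by blast
  show "{a. S \<subseteq> open_sl a} \<in> IntSO" "nu {a. S \<subseteq> open_sl a} = S"
    if "S \<in> fit ` (Sk :: 'a set set)" for S
    using that fitted open_covers_fit_Sk_mem_IntSO[OF assms] by blast+
  show "{a. nu F \<subseteq> open_sl a} = F" if "F \<in> (IntSO :: 'a set set)" for F
    using that by (rule recover)
qed

end
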